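(* Let $(G,E)$ be a connected simple graph with countable vertex set, $\mu$ a conductance, $d$ a metric on $G$, $\alpha>0$ and $\beta>1$. Assume: (DUHK($\beta$)) there is $C>0$ with $h_n(x,x)\le C/V_d(x,n^{1/\beta})$ for all $x$, $n$; (VG($\alpha$)) $V_d(x,r)\le C(r/s)^\alpha V_d(x,s)$ for all $x$, $r>s>0$; ($\Psi$($\beta$)) there is $C>0$ with $\mathbb{P}^x(\tau(x,r)\le n)\le C\exp(-(r^\beta/(Cn))^{1/(\beta-1)})$ for all $n\ge1$, $r>0$, $x$; (NdU) there is $C_+$ with $d(x,y)\le C_+$ for $x\sim y$; (dL) $r_0:=\inf_{x\ne y}d(x,y)>0$. Then there is $c_1>0$ such that $h_n(x,y)\le\frac{c_1}{V_d(x,n^{1/\beta})}\exp\bigl(-\bigl(\frac{d(x,y)^\beta}{c_1n}\bigr)^{1/(\beta-1)}\bigr)$ for all $x,y\in G$, $n\in\mathbb{N}$.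
   Context: $\mu_x=\sum_{y\sim x}\mu_{xy}$, $V_d(x,r)=\sum_{y\in B_d(x,r)}\mu_y$. $(X_n)$ random walk with $p(x,y)=\mu_{xy}/\mu_x$, $\mathbb{P}^x$ its law from $x$, $p_n(x,y)=\mathbb{P}^x(X_n=y)$, $h_n(x,y)=p_n(x,y)/\mu_y$, $\tau(x,r)=\min\{n:X_n\notin B_d(x,r)\}$. *)

theory Defs
  imports "HOL-Analysis.Analysis"
begin

definition conductance :: "('a \<Rightarrow> 'a \<Rightarrow> bool) \<Rightarrow> ('a \<Rightarrow> 'a \<Rightarrow> real) \<Rightarrow> bool" where
  "conductance E mu \<longleftrightarrow>
     (\<forall>x y. mu x y = mu y x) \<and> (\<forall>x y. mu x y \<ge> 0) \<and> (\<forall>x y. mu x y > 0 \<longleftrightarrow> E x y)"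

definition simple_connected_graph :: "('a \<Rightarrow> 'a \<Rightarrow> bool) \<Rightarrow> bool" where
  "simple_connected_graph E \<longleftrightarrow>
     (\<forall>x y. E x y \<longrightarrow> E y x) \<and> (\<forall>x. \<not> E x x) \<and> (\<forall>x y. E\<^sup>*\<^sup>* x y)"

definition is_metric :: "('a \<Rightarrow> 'a \<Rightarrow> real) \<Rightarrow> bool" where
  "is_metric d \<longleftrightarrow> (\<forall>x y. d x y \<ge> 0) \<and> (\<forall>x y. d x y = 0 \<longleftrightarrow> x = y) \<and>
     (\<forall>x y. d x y = d y x) \<and> (\<forall>x y z. d x z \<le> d x y + d y z)"

definition vmeas :: "('a \<Rightarrow> 'a \<Rightarrow> bool) \<Rightarrow> ('a \<Rightarrow> 'a \<Rightarrow> real) \<Rightarrow> 'a \<Rightarrow> real" where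
  "vmeas E mu x = infsum (\<lambda>y. mu x y) {y. E x y}"

definition dball :: "('a \<Rightarrow> 'a \<Rightarrow> real) \<Rightarrow> 'a \<Rightarrow> real \<Rightarrow> 'a set" where
  "dball d x r = {y. d x y \<le> r}"

definition vol :: "('a \<Rightarrow> 'a \<Rightarrow> bool) \<Rightarrow> ('a \<Rightarrow> 'a \<Rightarrow> real) \<Rightarrow> ('a \<Rightarrow> 'a \<Rightarrow> real) \<Rightarrow> 'a \<Rightarrow> real \<Rightarrow> real" where
  "vol E mu d x r = infsum (vmeas E mu) (dball d x r)"

definition trans_prob :: "('a \<Rightarrow> 'a \<Rightarrow> bool) \<Rightarrow> ('a \<Rightarrow> 'a \<Rightarrow> real) \<Rightarrow> 'a \<Rightarrow> 'a \<Rightarrow> real" where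
  "trans_prob E mu x y = mu x y / vmeas E mu x"

fun pn :: "('a \<Rightarrow> 'a \<Rightarrow> bool) \<Rightarrow> ('a \<Rightarrow> 'a \<Rightarrow> real) \<Rightarrow> nat \<Rightarrow> 'a \<Rightarrow> 'a \<Rightarrow> real" where
  "pn E mu 0 x y = (if x = y then 1 else 0)"
| "pn E mu (Suc n) x y = infsum (\<lambda>z. trans_prob E mu x z * pn E mu n z y) UNIV"

definition hn :: "('a \<Rightarrow> 'a \<Rightarrow> bool) \<Rightarrow> ('a \<Rightarrow> 'a \<Rightarrow> real) \<Rightarrow> nat \<Rightarrow> 'a \<Rightarrow> 'a \<Rightarrow> real" where
  "hn E mu n x y = pn E mu n x y / vmeas E mu y"

text \<open>stay_prob B n y = P^y(X_0, ..., X_n all lie in B).\<close>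
fun stay_prob :: "('a \<Rightarrow> 'a \<Rightarrow> bool) \<Rightarrow> ('a \<Rightarrow> 'a \<Rightarrow> real) \<Rightarrow> 'a set \<Rightarrow> nat \<Rightarrow> 'a \<Rightarrow> real" where
  "stay_prob E mu B 0 y = (if y \<in> B then 1 else 0)"
| "stay_prob E mu B (Suc n) y =
     (if y \<in> B then infsum (\<lambda>z. trans_prob E mu y z * stay_prob E mu B n z) UNIV else 0)"

text \<open>P^x(tau(x,r) \<le> n), tau(x,r) = min{n : X_n \<notin> B_d(x,r)}.\<close>
definition exit_prob :: "('a \<Rightarrow> 'a \<Rightarrow> bool) \<Rightarrow> ('a \<Rightarrow> 'a \<Rightarrow> real) \<Rightarrow> ('a \<Rightarrow> 'a \<Rightarrow> real) \<Rightarrow> 'a \<Rightarrow> real \<Rightarrow> nat \<Rightarrow> real" where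
  "exit_prob E mu d x r n = 1 - stay_prob E mu (dball d x r) n x"

end

theory Submission
  imports Defs "HOL-Real_Asymp.Real_Asymp"
begin

text \<open>The on-diagonal bound is bootstrapped to the whole kernel. First a uniform bound
  \<open>h n x z * V(x, n powr (1/\<beta>)) \<le> B\<close> is proved by induction on \<open>n\<close>. Near the diagonal,
  \<open>d x z \<le> K n powr (1/\<beta>)\<close>, it follows from
  \<open>h (a + b) x z \<le> (h (2a) x x + h (2b) z z) / 2\<close> and volume growth. Far from it, split
  \<open>n = m + m'\<close>: during one of the two halves the walk travels at least \<open>d x z / 3\<close>, which the
  exit-time estimate makes unlikely, while during the other half the kernel is controlled by the
  induction hypothesis; once \<open>K\<close> is large the exit tail beats the polynomial volume factor
  \<open>(1 + t) powr \<alpha>\<close>, \<open>t = d x z / n powr (1/\<beta>)\<close>. Running the far-off-diagonal estimate once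
  more with the uniform bound gives the sub-Gaussian factor; half of its exponent absorbs
  \<open>(1 + t) powr \<alpha>\<close>. Bounded edge lengths settle \<open>n = 1\<close>, and the uniform separation \<open>r0\<close>
  of the vertices makes small balls singletons.\<close>

lemma elem_le_has_sum:
  fixes f :: "'a \<Rightarrow> real"
  assumes "\<And>x. x \<in> S \<Longrightarrow> f x \<ge> 0" "(f has_sum s) S" "x \<in> S"
  shows "f x \<le> s"
  using finite_sum_le_has_sum[OF assms(2), of "{x}"] assms by auto

lemma summable_on_mult_bounded:
  fixes a :: "'a \<Rightarrow> real"
  assumes "a summable_on A" "\<And>z. 0 \<le> a z" "\<And>z. 0 \<le> g z" "\<And>z. g z \<le> K"
  shows "(\<lambda>z. a z * g z) summable_on A"
  by (rule summable_on_comparison_test[OF summable_on_cmult_left[OF assms(1), of K]])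
     (use assms in \<open>auto simp: mult_left_mono mult_nonneg_nonneg\<close>)

lemma infsum_delta_mult: "infsum (\<lambda>z. (if x = z then 1 else 0) * f z) UNIV = (f x :: real)"
proof -
  have "infsum (\<lambda>z. (if x = z then 1 else 0) * f z) UNIV =
        infsum (\<lambda>z. (if x = z then 1 else 0) * f z) {x}"
    by (rule infsum_cong_neutral) auto
  then show ?thesis by simp
qed

text \<open>Tonelli for nonnegative double series; the bound \<open>K\<close> on the row sums \<open>g z\<close> supplies
  the summability of the double series.\<close>

lemma has_sum_mixture:
  fixes a :: "'a \<Rightarrow> real" and f :: "'a \<Rightarrow> 'b \<Rightarrow> real"
  assumes a_nonneg: "\<And>z. a z \<ge> 0" and a_summable: "a summable_on UNIV"
    and f_nonneg: "\<And>z w. f z w \<ge> 0" and f_sum: "\<And>z. (f z has_sum g z) S"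
    and g_bounded: "\<And>z. g z \<le> K"
  shows "((\<lambda>w. infsum (\<lambda>z. a z * f z w) UNIV) has_sum infsum (\<lambda>z. a z * g z) UNIV) S"
    and "w \<in> S \<Longrightarrow> (\<lambda>z. a z * f z w) summable_on UNIV"
proof -
  have g_nonneg: "g z \<ge> 0" for z using has_sum_nonneg[OF f_sum] f_nonneg by blast
  have ag: "(\<lambda>z. a z * g z) summable_on UNIV"
    by (rule summable_on_mult_bounded[OF a_summable a_nonneg g_nonneg g_bounded])
  define F where "F = (\<lambda>(z,w). a z * f z w)"
  have rows: "((\<lambda>w. F (z,w)) has_sum a z * g z) S" for z
    unfolding F_def using has_sum_cmult_right[OF f_sum] by simp
  have "F summable_on Sigma UNIV (\<lambda>_. S)"
    by (rule summable_on_SigmaI[OF rows ag]) (auto simp: F_def a_nonneg f_nonneg)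
  then have "(F has_sum infsum (\<lambda>z. a z * g z) UNIV) (Sigma UNIV (\<lambda>_. S))"
    by (rule has_sum_SigmaI[OF rows has_sum_infsum[OF ag]])
  then have swapped: "((\<lambda>(w,z). F (z,w)) has_sum infsum (\<lambda>z. a z * g z) UNIV) (S \<times> UNIV)"
    using has_sum_swap by fastforce
  then have "(\<lambda>(w,z). a z * f z w) summable_on Sigma S (\<lambda>_. UNIV)"
    unfolding F_def summable_on_def by (auto simp: case_prod_unfold)
  from summable_on_SigmaD1[OF this]
  show columns: "w \<in> S \<Longrightarrow> (\<lambda>z. a z * f z w) summable_on UNIV" for w
    by blast
  show "((\<lambda>w. infsum (\<lambda>z. a z * f z w) UNIV) has_sum infsum (\<lambda>z. a z * g z) UNIV) S"
    by (rule has_sum_SigmaD[OF swapped]) (use columns in \<open>auto simp: F_def\<close>)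
qed

locale reversible_walk =
  fixes E :: "'a \<Rightarrow> 'a \<Rightarrow> bool" and mu :: "'a \<Rightarrow> 'a \<Rightarrow> real"
  assumes mu_sym: "\<And>x y. mu x y = mu y x" and mu_nonneg: "\<And>x y. mu x y \<ge> 0"
    and mu_pos_iff: "\<And>x y. mu x y > 0 \<longleftrightarrow> E x y"
    and mu_summable: "\<And>x. (\<lambda>y. mu x y) summable_on {y. E x y}"
    and vmeas_pos: "\<And>x. vmeas E mu x > 0"
begin

abbreviation "M \<equiv> vmeas E mu"
abbreviation "P \<equiv> trans_prob E mu"
abbreviation "p \<equiv> pn E mu"
abbreviation "h \<equiv> hn E mu"

lemma mu_eq_0_if_not_edge: "\<not> E x y \<Longrightarrow> mu x y = 0"
  using mu_nonneg[of x y] mu_pos_iff[of x y] by linarith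

lemma mu_has_sum_vmeas: "((\<lambda>y. mu x y) has_sum M x) UNIV"
proof -
  have "((\<lambda>y. mu x y) has_sum M x) {y. E x y}"
    unfolding vmeas_def using mu_summable by simp
  then show ?thesis
    by (subst has_sum_cong_neutral[where T="{y. E x y}"]) (auto simp: mu_eq_0_if_not_edge)
qed

lemma vmeas_mult_trans_prob: "M x * P x y = mu x y"
  using vmeas_pos[of x] unfolding trans_prob_def by simp

lemma trans_prob_nonneg: "P x y \<ge> 0"
  unfolding trans_prob_def using mu_nonneg vmeas_pos by (simp add: less_imp_le)

lemma trans_prob_has_sum: "(P x has_sum 1) UNIV"
proof -
  have "((\<lambda>y. mu x y * (1 / M x)) has_sum (M x * (1 / M x))) UNIV"
    by (rule has_sum_cmult_left[OF mu_has_sum_vmeas])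
  then show ?thesis using vmeas_pos[of x] unfolding trans_prob_def by simp
qed

lemma trans_prob_summable: "P x summable_on A"
  using trans_prob_has_sum summable_on_def summable_on_subset_banach by (metis top_greatest)

lemma pn_nonneg_has_sum: "(\<forall>y. p n x y \<ge> 0) \<and> (p n x has_sum 1) UNIV"
proof (induction n arbitrary: x)
  case 0
  have "((\<lambda>y. if x = y then 1 else 0) has_sum (1::real)) UNIV"
    by (subst has_sum_cong_neutral[where T="{x}" and g="\<lambda>_. 1"]) (auto intro: has_sum_finiteI)
  then show ?case by simp
next
  case (Suc n)
  have step: "p (Suc n) x = (\<lambda>w. infsum (\<lambda>z. P x z * p n z w) UNIV)"
    by (simp add: fun_eq_iff)
  have "(p (Suc n) x has_sum infsum (\<lambda>z. P x z * 1) UNIV) UNIV"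
    unfolding step
    by (rule has_sum_mixture(1)[where K=1]) (use Suc trans_prob_nonneg trans_prob_summable in auto)
  moreover have "infsum (\<lambda>z. P x z * 1) UNIV = 1"
    using infsumI[OF trans_prob_has_sum[of x]] by simp
  moreover have "p (Suc n) x y \<ge> 0" for y
    unfolding step using Suc trans_prob_nonneg by (auto intro: infsum_nonneg)
  ultimately show ?case by metis
qed

lemma pn_nonneg: "p n x y \<ge> 0"
  using pn_nonneg_has_sum by blast

lemma pn_has_sum: "(p n x has_sum 1) UNIV"
  using pn_nonneg_has_sum by blast

lemma pn_summable: "p n x summable_on A"
  using pn_has_sum summable_on_def summable_on_subset_banach by (metis top_greatest)

lemma pn_le_1: "p n x y \<le> 1"
  using elem_le_has_sum[OF _ pn_has_sum] pn_nonneg by blast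

lemma infsum_pn_le_1: "infsum (p n x) A \<le> 1"
  using infsum_mono_neutral[OF pn_summable[of n x A] pn_summable[of n x UNIV]]
    infsumI[OF pn_has_sum[of n x]] pn_nonneg by auto

lemma pn_mult_summable:
  "(\<And>z. 0 \<le> g z) \<Longrightarrow> (\<And>z. g z \<le> 1) \<Longrightarrow> (\<lambda>z. p n x z * g z) summable_on A"
  by (rule summable_on_mult_bounded[OF pn_summable pn_nonneg])

lemma trans_prob_mult_summable:
  "(\<And>z. 0 \<le> g z) \<Longrightarrow> (\<And>z. g z \<le> 1) \<Longrightarrow> (\<lambda>z. P x z * g z) summable_on A"
  by (rule summable_on_mult_bounded[OF trans_prob_summable trans_prob_nonneg])

lemma pn_add: "p (m + n) x y = infsum (\<lambda>z. p m x z * p n z y) UNIV"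
proof (induction m arbitrary: x)
  case 0
  then show ?case using infsum_delta_mult[of x "\<lambda>z. p n z y"] by simp
next
  case (Suc m)
  have "p (Suc m + n) x y = infsum (\<lambda>w. P x w * infsum (\<lambda>z. p m w z * p n z y) UNIV) UNIV"
    using Suc by simp
  also have "\<dots> = infsum (\<lambda>z. infsum (\<lambda>w. P x w * (p m w z * p n z y)) UNIV) UNIV"
  proof (rule sym, rule infsumI, rule has_sum_mixture(1)[where K=1])
    show "((\<lambda>z. p m w z * p n z y) has_sum infsum (\<lambda>z. p m w z * p n z y) UNIV) UNIV" for w
      using pn_mult_summable[of "\<lambda>z. p n z y"] pn_nonneg pn_le_1 by auto
    show "infsum (\<lambda>z. p m w z * p n z y) UNIV \<le> 1" for w
      using Suc[symmetric] pn_le_1 by simp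
  qed (use trans_prob_nonneg trans_prob_summable pn_nonneg in auto)
  also have "\<dots> = infsum (\<lambda>z. infsum (\<lambda>w. P x w * p m w z) UNIV * p n z y) UNIV"
  proof (rule infsum_cong)
    fix z
    have "(\<lambda>w. P x w * p m w z) summable_on UNIV"
      by (rule has_sum_mixture(2)[where K=1 and g="\<lambda>_. 1" and S=UNIV])
         (use trans_prob_nonneg trans_prob_summable pn_nonneg pn_has_sum in auto)
    then show "infsum (\<lambda>w. P x w * (p m w z * p n z y)) UNIV =
               infsum (\<lambda>w. P x w * p m w z) UNIV * p n z y"
      using infsum_cmult_left[of _ "\<lambda>w. P x w * p m w z" UNIV] by (simp add: mult.assoc)
  qed
  also have "\<dots> = infsum (\<lambda>z. p (Suc m) x z * p n z y) UNIV" by simp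
  finally show ?case .
qed

lemma pn_1: "p 1 x y = P x y"
  using infsum_delta_mult[of y "P x"] by (simp add: mult.commute eq_commute)

lemma trans_prob_le_1: "P x y \<le> 1"
  using pn_le_1[of 1 x y] by (simp only: pn_1)

lemma vmeas_mult_pn_sym: "M x * p n x y = M y * p n y x"
proof (induction n arbitrary: x y)
  case 0
  then show ?case by simp
next
  case (Suc n)
  have "M x * p (Suc n) x y = M x * infsum (\<lambda>z. P x z * p n z y) UNIV" by simp
  also have "\<dots> = infsum (\<lambda>z. M x * P x z * p n z y) UNIV"
    by (subst infsum_cmult_right[symmetric])
       (auto simp: mult.assoc intro: trans_prob_mult_summable pn_nonneg pn_le_1)
  also have "\<dots> = infsum (\<lambda>z. P z x * (M z * p n z y)) UNIV"
    by (rule infsum_cong) (simp add: vmeas_mult_trans_prob mu_sym mult.commute mult.left_commute)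
  also have "\<dots> = infsum (\<lambda>z. P z x * (M y * p n y z)) UNIV"
    using Suc by simp
  also have "\<dots> = M y * infsum (\<lambda>z. p n y z * P z x) UNIV"
    using pn_mult_summable[of "\<lambda>z. P z x" n y UNIV] trans_prob_nonneg trans_prob_le_1
    by (subst infsum_cmult_right[symmetric]) (auto simp: mult_ac)
  also have "\<dots> = M y * p (Suc n) y x"
  proof -
    have "p (n + 1) y x = infsum (\<lambda>z. p n y z * P z x) UNIV"
      using pn_add[of n 1 y x] by (simp only: pn_1)
    then show ?thesis by simp
  qed
  finally show ?case .
qed

lemma hn_nonneg: "h n x y \<ge> 0"
  unfolding hn_def using pn_nonneg vmeas_pos by (simp add: less_imp_le)

lemma hn_sym: "h n x y = h n y x"
  using vmeas_mult_pn_sym[of x n y] vmeas_pos[of x] vmeas_pos[of y] unfolding hn_def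
  by (simp add: field_simps)

lemma hn_le_inverse_vmeas: "h n x y \<le> 1 / M x"
  using pn_le_1[of n y x] vmeas_pos[of x] hn_sym[of n x y] unfolding hn_def
  by (simp add: divide_right_mono)

lemma hn_1_eq_0_if_not_edge: "\<not> E x y \<Longrightarrow> h 1 x y = 0"
  unfolding hn_def using pn_1[of x y] mu_eq_0_if_not_edge[of x y] by (simp add: trans_prob_def)

lemma pn_mult_hn_summable: "(\<lambda>w. p a x w * h b z w) summable_on A"
  by (rule summable_on_mult_bounded[OF pn_summable pn_nonneg hn_nonneg hn_le_inverse_vmeas])

lemma hn_add: "h (a + b) x z = infsum (\<lambda>w. p a x w * h b z w) UNIV"
proof -
  have "h (a + b) x z = infsum (\<lambda>w. p a x w * p b w z) UNIV * (1 / M z)"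
    unfolding hn_def using pn_add by simp
  also have "\<dots> = infsum (\<lambda>w. p a x w * p b w z * (1 / M z)) UNIV"
    by (rule infsum_cmult_left[symmetric]) (use pn_mult_summable pn_nonneg pn_le_1 in auto)
  also have "\<dots> = infsum (\<lambda>w. p a x w * h b z w) UNIV"
    by (rule infsum_cong) (metis hn_sym hn_def times_divide_eq_right mult_1_right)
  finally show ?thesis .
qed

lemma hn_add_has_sum: "((\<lambda>w. p a x w * h b z w) has_sum h (a + b) x z) UNIV"
  using hn_add pn_mult_hn_summable has_sum_infsum by metis

text \<open>Writing \<open>p a x w = M w * h a x w\<close>, this is the pointwise inequality
  \<open>h a x w * h b z w \<le> (h a x w\<^sup>2 + h b z w\<^sup>2) / 2\<close> summed against \<open>M\<close>.\<close>

lemma hn_add_le_diag_mean: "h (a + b) x z \<le> (h (a + a) x x + h (b + b) z z) / 2"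
proof (rule has_sum_mono[OF hn_add_has_sum has_sum_divide_const[OF has_sum_add]])
  show "((\<lambda>w. p a x w * h a x w) has_sum h (a + a) x x) UNIV"
    and "((\<lambda>w. p b z w * h b z w) has_sum h (b + b) z z) UNIV"
    by (rule hn_add_has_sum)+
  fix w
  have p: "p a x w = M w * h a x w" "p b z w = M w * h b z w"
    unfolding hn_def using vmeas_pos[of w] by auto
  have "h a x w * h b z w \<le> (h a x w * h a x w + h b z w * h b z w) / 2"
    using sum_squares_ge_zero[of "h a x w - h b z w" 0] by (simp add: algebra_simps power2_eq_square)
  then have "M w * (h a x w * h b z w) \<le> M w * ((h a x w * h a x w + h b z w * h b z w) / 2)"
    using vmeas_pos[of w] by (intro mult_left_mono) auto
  then show "p a x w * h b z w \<le> (p a x w * h a x w + p b z w * h b z w) / 2"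
    unfolding p by (simp add: algebra_simps)
qed

lemma hn_add_le_split:
  assumes "\<And>w. h m' z w \<le> Hz" and "\<And>w. h m x w \<le> Hx"
  shows "h (m + m') x z \<le> Hz * infsum (p m x) A + Hx * infsum (p m' z) (- A)"
proof -
  have "h (m + m') x z = infsum (\<lambda>w. p m x w * h m' z w) A + infsum (\<lambda>w. p m x w * h m' z w) (- A)"
    using hn_add infsum_Un_disjoint[OF pn_mult_hn_summable pn_mult_hn_summable, of A "- A"]
    by (simp add: Un_ac)
  also have "infsum (\<lambda>w. p m x w * h m' z w) A \<le> infsum (\<lambda>w. Hz * p m x w) A"
    using mult_left_mono[OF assms(1) pn_nonneg]
    by (intro infsum_mono pn_mult_hn_summable summable_on_cmult_right pn_summable)
       (simp add: mult.commute)
  also have "infsum (\<lambda>w. p m x w * h m' z w) (- A) \<le> infsum (\<lambda>w. Hx * p m' z w) (- A)"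
  proof (intro infsum_mono pn_mult_hn_summable summable_on_cmult_right pn_summable)
    fix w
    have "p m x w * h m' z w = h m x w * p m' z w"
      unfolding hn_def using vmeas_pos[of w] by simp
    then show "p m x w * h m' z w \<le> Hx * p m' z w"
      using mult_right_mono[OF assms(2) pn_nonneg] by simp
  qed
  finally show ?thesis
    by (simp add: infsum_cmult_right[OF pn_summable])
qed

lemma stay_prob_bounds: "0 \<le> stay_prob E mu B n y \<and> stay_prob E mu B n y \<le> 1"
proof (induction n arbitrary: y)
  case 0
  then show ?case by simp
next
  case (Suc n)
  have "infsum (\<lambda>z. P y z * stay_prob E mu B n z) UNIV \<le> infsum (\<lambda>z. P y z * 1) UNIV"
    using Suc trans_prob_nonneg
    by (intro infsum_mono trans_prob_mult_summable) (auto intro: mult_left_le)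
  also have "\<dots> = 1" using infsumI[OF trans_prob_has_sum[of y]] by simp
  finally show ?case using Suc trans_prob_nonneg by (auto intro: infsum_nonneg)
qed

lemma stay_prob_le_infsum_pn: "stay_prob E mu B n y \<le> infsum (p n y) B"
proof (induction n arbitrary: y)
  case 0
  show ?case
  proof (cases "y \<in> B")
    case True
    then have "infsum (p 0 y) B = infsum (p 0 y) {y}"
      by (intro infsum_cong_neutral) auto
    also have "\<dots> = 1" by simp
    finally show ?thesis using True by (simp del: pn.simps)
  next
    case False
    then have "infsum (p 0 y) B = 0"
      by (intro infsum_0) auto
    then show ?thesis using False by (simp del: pn.simps)
  qed
next
  case (Suc n)
  show ?case
  proof (cases "y \<in> B")
    case False
    then show ?thesis using pn_nonneg[of "Suc n" y] by (simp del: pn.simps add: infsum_nonneg)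
  next
    case True
    then have "stay_prob E mu B (Suc n) y = infsum (\<lambda>z. P y z * stay_prob E mu B n z) UNIV"
      by simp
    also have "\<dots> \<le> infsum (\<lambda>z. P y z * infsum (p n z) B) UNIV"
      using Suc trans_prob_nonneg stay_prob_bounds pn_nonneg infsum_pn_le_1
      by (intro infsum_mono trans_prob_mult_summable) (auto intro: infsum_nonneg mult_left_mono)
    also have "\<dots> = infsum (\<lambda>w. infsum (\<lambda>z. P y z * p n z w) UNIV) B"
      by (rule sym, rule infsumI, rule has_sum_mixture(1)[where K=1])
         (use trans_prob_nonneg trans_prob_summable pn_nonneg pn_summable infsum_pn_le_1 in auto)
    also have "\<dots> = infsum (p (Suc n) y) B" by (rule infsum_cong) simp
    finally show ?thesis .
  qed
qed

lemma infsum_pn_compl_le_exit: "infsum (p n y) (- B) \<le> 1 - stay_prob E mu B n y"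
proof -
  have "infsum (p n y) (B \<union> - B) = infsum (p n y) B + infsum (p n y) (- B)"
    by (rule infsum_Un_disjoint) (auto simp: pn_summable)
  moreover have "infsum (p n y) (B \<union> - B) = 1" using infsumI[OF pn_has_sum[of n y]] by simp
  ultimately show ?thesis using stay_prob_le_infsum_pn[of B n y] by linarith
qed

end

definition sub_gaussian :: "real \<Rightarrow> real \<Rightarrow> real \<Rightarrow> real" where
  "sub_gaussian \<beta> c t = exp (- ((t powr \<beta> / c) powr (1 / (\<beta> - 1))))"

lemma sub_gaussian_pos: "0 < sub_gaussian \<beta> c t"
  unfolding sub_gaussian_def by simp

lemma sub_gaussian_le_1: "sub_gaussian \<beta> c t \<le> 1"
  unfolding sub_gaussian_def by simp

lemma sub_gaussian_mono:
  assumes "\<beta> > 1" "0 < c" "c \<le> c'"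
  shows "sub_gaussian \<beta> c t \<le> sub_gaussian \<beta> c' t"
proof -
  have "t powr \<beta> / c' \<le> t powr \<beta> / c"
    using assms by (intro divide_left_mono) auto
  then have "(t powr \<beta> / c') powr (1 / (\<beta> - 1)) \<le> (t powr \<beta> / c) powr (1 / (\<beta> - 1))"
    using assms by (intro powr_mono2) auto
  then show ?thesis unfolding sub_gaussian_def by simp
qed

lemma sub_gaussian_scale:
  assumes "0 < s" "0 \<le> t"
  shows "sub_gaussian \<beta> c (s * t) = sub_gaussian \<beta> (c / s powr \<beta>) t"
  using assms unfolding sub_gaussian_def by (simp add: powr_mult field_simps)

lemma sub_gaussian_eq_square:
  assumes "\<beta> > 1" "0 < c"
  shows "sub_gaussian \<beta> c t = sub_gaussian \<beta> (2 powr (\<beta> - 1) * c) t ^ 2"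
proof -
  define y where "y = t powr \<beta> / c"
  have "y \<ge> 0" unfolding y_def using assms by simp
  have "(t powr \<beta> / (2 powr (\<beta> - 1) * c)) powr (1 / (\<beta> - 1)) =
        y powr (1 / (\<beta> - 1)) / (2 powr (\<beta> - 1)) powr (1 / (\<beta> - 1))"
    unfolding y_def using assms by (simp add: powr_divide powr_mult field_simps)
  also have "(2 powr (\<beta> - 1)) powr (1 / (\<beta> - 1)) = (2::real)"
    using assms by (simp add: powr_powr)
  finally show ?thesis
    unfolding sub_gaussian_def y_def[symmetric] by (simp add: power2_eq_square exp_add[symmetric])
qed

lemma sub_gaussian_ge_one_third:
  assumes "\<beta> > 1" "0 < c" "t powr \<beta> \<le> c"
  shows "1 / 3 \<le> sub_gaussian \<beta> c t"
proof -
  have "(t powr \<beta> / c) powr (1 / (\<beta> - 1)) \<le> 1"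
    using assms powr_mono2[of "1 / (\<beta> - 1)" "t powr \<beta> / c" 1] by simp
  then have "exp (- 1) \<le> sub_gaussian \<beta> c t"
    unfolding sub_gaussian_def by simp
  moreover have "1 / 3 \<le> exp (- 1 :: real)"
    using exp_le by (simp add: exp_minus field_simps)
  ultimately show ?thesis
    by linarith
qed

lemma powr_mult_exp_powr_tendsto_0:
  fixes a g k :: real
  assumes "g > 0" "k > 0"
  shows "((\<lambda>t. (1 + t) powr a * exp (- (t powr g / k))) \<longlongrightarrow> 0) at_top"
  using assms by real_asymp

lemma powr_mult_sub_gaussian_tendsto_0:
  assumes "\<beta> > 1" "0 < c"
  shows "((\<lambda>t. (1 + t) powr a * sub_gaussian \<beta> c t) \<longlongrightarrow> 0) at_top"
proof -
  have "sub_gaussian \<beta> c t = exp (- (t powr (\<beta> / (\<beta> - 1)) / c powr (1 / (\<beta> - 1))))" for t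
    unfolding sub_gaussian_def using assms by (simp add: powr_divide powr_powr)
  then show ?thesis
    using powr_mult_exp_powr_tendsto_0[of "\<beta> / (\<beta> - 1)" "c powr (1 / (\<beta> - 1))" a] assms
    by simp
qed

lemma powr_mult_sub_gaussian_eventually_le:
  assumes "\<beta> > 1" "0 < c" "0 < \<epsilon>"
  obtains K where "\<And>t. t \<ge> K \<Longrightarrow> (1 + t) powr a * sub_gaussian \<beta> c t \<le> \<epsilon>"
proof -
  have "eventually (\<lambda>t. (1 + t) powr a * sub_gaussian \<beta> c t < \<epsilon>) at_top"
    using order_tendstoD(2)[OF powr_mult_sub_gaussian_tendsto_0] assms by blast
  then show ?thesis
    using that unfolding eventually_at_top_linorder by (meson less_imp_le)
qed

lemma powr_mult_sub_gaussian_bounded: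
  assumes "\<beta> > 1" "0 < c" "0 \<le> a"
  obtains L where "\<And>t. t \<ge> 0 \<Longrightarrow> (1 + t) powr a * sub_gaussian \<beta> c t \<le> L"
proof -
  obtain K where K: "\<And>t. t \<ge> K \<Longrightarrow> (1 + t) powr a * sub_gaussian \<beta> c t \<le> 1"
    using powr_mult_sub_gaussian_eventually_le[OF assms(1,2), of 1] by auto
  have "(1 + t) powr a * sub_gaussian \<beta> c t \<le> max 1 ((1 + \<bar>K\<bar>) powr a)" if "t \<ge> 0" for t
  proof (cases "t \<ge> K")
    case False
    then have "(1 + t) powr a \<le> (1 + \<bar>K\<bar>) powr a"
      using that assms by (intro powr_mono2) auto
    then have "(1 + t) powr a * sub_gaussian \<beta> c t \<le> (1 + \<bar>K\<bar>) powr a * 1"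
      by (intro mult_mono sub_gaussian_le_1) (auto intro: less_imp_le sub_gaussian_pos)
    then show ?thesis by simp
  qed (use K in force)
  then show ?thesis using that by blast
qed

lemma powr_mult_sub_gaussian_le_sub_gaussian:
  assumes "\<beta> > 1" "0 < c" "0 \<le> t" "2 powr (\<beta> - 1) * c \<le> c'"
    and L: "(1 + t) powr a * sub_gaussian \<beta> (2 powr (\<beta> - 1) * c) t \<le> L"
  shows "(1 + t) powr a * sub_gaussian \<beta> c t \<le> L * sub_gaussian \<beta> c' t"
proof -
  define c2 where "c2 = 2 powr (\<beta> - 1) * c"
  have "0 \<le> L"
    using order_trans[OF mult_nonneg_nonneg[OF powr_ge_zero less_imp_le[OF sub_gaussian_pos]] L] .
  have "(1 + t) powr a * sub_gaussian \<beta> c t = ((1 + t) powr a * sub_gaussian \<beta> c2 t) * sub_gaussian \<beta> c2 t"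
    unfolding c2_def using sub_gaussian_eq_square[OF assms(1,2), of t] by (simp add: power2_eq_square)
  also have "\<dots> \<le> L * sub_gaussian \<beta> c' t"
    using L \<open>0 \<le> L\<close> sub_gaussian_mono[of \<beta> c2 c' t] assms(1,2,4) unfolding c2_def
    by (intro mult_mono) (auto intro: less_imp_le[OF sub_gaussian_pos])
  finally show ?thesis .
qed

locale sub_gaussian_walk = reversible_walk +
  fixes d :: "'a \<Rightarrow> 'a \<Rightarrow> real" and \<alpha> \<beta> CD CV CP Cp r0 :: real
  assumes metric: "is_metric d"
    and vmeas_summable_dball: "\<And>x r. M summable_on dball d x r"
    and alpha_pos: "\<alpha> > 0" and beta_gt_1: "\<beta> > 1"
    and CD_pos: "CD > 0"
    and diag_upper: "\<And>x n. h n x x \<le> CD / vol E mu d x (real n powr (1 / \<beta>))"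
    and CV_ge_1: "CV \<ge> 1"
    and vol_growth: "\<And>x r s. 0 < s \<Longrightarrow> s \<le> r \<Longrightarrow>
      vol E mu d x r \<le> CV * (r / s) powr \<alpha> * vol E mu d x s"
    and CP_pos: "CP > 0"
    and exit_prob_le: "\<And>n x r. n \<ge> 1 \<Longrightarrow> r > 0 \<Longrightarrow>
      exit_prob E mu d x r n \<le> CP * sub_gaussian \<beta> (CP * real n) r"
    and Cp_pos: "Cp > 0" and edge_dist_le: "\<And>x y. E x y \<Longrightarrow> d x y \<le> Cp"
    and r0_pos: "r0 > 0" and dist_ge_r0: "\<And>x y. x \<noteq> y \<Longrightarrow> d x y \<ge> r0"
begin

abbreviation "V \<equiv> vol E mu d"
abbreviation "rn n \<equiv> real n powr (1 / \<beta>)"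

lemma d_self: "d x x = 0" and d_nonneg: "d x y \<ge> 0" and d_sym: "d x y = d y x"
  and d_triangle: "d x z \<le> d x y + d y z"
  using metric unfolding is_metric_def by auto

lemma vol_mono: "r \<le> s \<Longrightarrow> V x r \<le> V x s"
  unfolding vol_def using vmeas_pos
  by (intro infsum_mono_neutral vmeas_summable_dball) (auto simp: dball_def less_imp_le)

lemma vmeas_le_vol: "r \<ge> 0 \<Longrightarrow> M x \<le> V x r"
  unfolding vol_def using vmeas_pos
  by (intro elem_le_has_sum[OF _ has_sum_infsum[OF vmeas_summable_dball]])
     (auto simp: dball_def d_self less_imp_le)

lemma vol_pos: "r \<ge> 0 \<Longrightarrow> V x r > 0"
  using vmeas_le_vol vmeas_pos by (meson less_le_trans)

lemma vol_eq_vmeas: "0 \<le> r \<Longrightarrow> r < r0 \<Longrightarrow> V x r = M x"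
proof -
  assume "0 \<le> r" "r < r0"
  then have "dball d x r = {x}"
    unfolding dball_def using dist_ge_r0[of x] d_self[of x] by force
  then show ?thesis unfolding vol_def by simp
qed

lemma dball_subset_shift: "dball d x r \<subseteq> dball d z (r + d x z)"
proof
  fix w assume "w \<in> dball d x r"
  then show "w \<in> dball d z (r + d x z)"
    using d_triangle[of z w x] d_sym[of x z] by (simp add: dball_def)
qed

lemma vol_le_vol_shift: "V x r \<le> V z (r + d x z)"
  unfolding vol_def using vmeas_pos dball_subset_shift[of x r z]
  by (intro infsum_mono_neutral vmeas_summable_dball) (auto simp: less_imp_le)

lemma vol_growth_le: "0 < s \<Longrightarrow> s \<le> r \<Longrightarrow> r \<le> c * s \<Longrightarrow> V x r \<le> CV * c powr \<alpha> * V x s"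
proof -
  assume rs: "0 < s" "s \<le> r" "r \<le> c * s"
  have "(r / s) powr \<alpha> \<le> c powr \<alpha>"
    using rs alpha_pos by (intro powr_mono2) (auto simp: divide_le_eq)
  then show ?thesis
    using vol_growth[OF rs(1,2)] CV_ge_1 vol_pos[of s x] rs(1)
    by (smt (verit) mult_left_mono mult_right_mono)
qed

lemma vol_le_vol_other_center:
  assumes "0 < s" "r + d x z \<le> c * s" "1 \<le> c"
  shows "V x r \<le> CV * c powr \<alpha> * V z s"
proof -
  have "V x r \<le> V z (c * s)"
    using vol_le_vol_shift vol_mono[OF assms(2)] by (rule order_trans)
  also have "\<dots> \<le> CV * c powr \<alpha> * V z s"
    using assms by (intro vol_growth_le) auto
  finally show ?thesis .
qed

lemma rn_mono: "m \<le> n \<Longrightarrow> rn m \<le> rn n"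
  using beta_gt_1 by (intro powr_mono2) auto

lemma rn_le_mult: "real n \<le> c * real m \<Longrightarrow> 1 \<le> c \<Longrightarrow> rn n \<le> c * rn m"
proof -
  assume nm: "real n \<le> c * real m" and c: "1 \<le> c"
  have "rn n \<le> (c * real m) powr (1 / \<beta>)"
    using nm beta_gt_1 by (intro powr_mono2) auto
  also have "\<dots> = c powr (1 / \<beta>) * rn m"
    using c by (simp add: powr_mult)
  also have "c powr (1 / \<beta>) \<le> c powr 1"
    using c beta_gt_1 by (intro powr_mono) auto
  finally show ?thesis
    using c by (simp add: mult_right_mono)
qed

lemma sub_gaussian_rn:
  "n \<ge> 1 \<Longrightarrow> 0 \<le> t \<Longrightarrow> sub_gaussian \<beta> (c * real n) (rn n * t) = sub_gaussian \<beta> c t"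
  using beta_gt_1 by (simp add: sub_gaussian_scale powr_powr)

lemma sub_gaussian_third_rn:
  assumes "n \<ge> 1" "0 \<le> r"
  shows "sub_gaussian \<beta> (c * real n) (r / 3) = sub_gaussian \<beta> (3 powr \<beta> * c) (r / rn n)"
proof -
  have "sub_gaussian \<beta> (c * real n) (r / 3) = sub_gaussian \<beta> c ((1 / 3) * (r / rn n))"
    using assms sub_gaussian_rn[of n "r / rn n / 3" c] by (simp add: mult.commute)
  also have "\<dots> = sub_gaussian \<beta> (3 powr \<beta> * c) (r / rn n)"
    using assms sub_gaussian_scale[of "1 / 3" "r / rn n" \<beta> c] by (simp add: powr_divide mult.commute)
  finally show ?thesis .
qed

lemma infsum_pn_outside_dball_le:
  assumes "1 \<le> k" "k \<le> n" "0 < r"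
  shows "infsum (p k y) (- dball d y r) \<le> CP * sub_gaussian \<beta> (CP * real n) r"
proof -
  have "infsum (p k y) (- dball d y r) \<le> exit_prob E mu d y r k"
    unfolding exit_prob_def by (rule infsum_pn_compl_le_exit)
  also have "\<dots> \<le> CP * sub_gaussian \<beta> (CP * real k) r"
    using exit_prob_le assms by simp
  also have "\<dots> \<le> CP * sub_gaussian \<beta> (CP * real n) r"
    using assms CP_pos beta_gt_1 by (intro mult_left_mono sub_gaussian_mono) auto
  finally show ?thesis .
qed

text \<open>Balls of radius below \<open>r0\<close> are singletons; this handles \<open>n div 2 = 0\<close>, where
  \<open>rn 0 = 0\<close>.\<close>

lemma vol_rn_le_vol_rn_half:
  "V x (rn n) \<le> CV * max 2 (2 / r0) powr \<alpha> * V x (rn (n div 2 + n div 2))"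
proof (cases "n div 2 = 0")
  case True
  define s where "s = min 1 (r0 / 2)"
  have s: "0 < s" "s < r0" "1 \<le> max 2 (2 / r0) * s"
    unfolding s_def using r0_pos by (auto simp: min_def max_def field_simps)
  have "n = 0 \<or> n = 1"
    using True by auto
  then have "rn n \<le> 1"
    by auto
  then have "V x (rn n) \<le> V x 1"
    by (rule vol_mono)
  also have "\<dots> \<le> CV * max 2 (2 / r0) powr \<alpha> * V x s"
    using s by (intro vol_growth_le) (auto simp: s_def)
  also have "V x s = V x (rn (n div 2 + n div 2))"
    using vol_eq_vmeas[of s x] vol_eq_vmeas[of 0 x] s r0_pos True by simp
  finally show ?thesis .
next
  case False
  have "n \<le> 2 * (n div 2 + n div 2)"
    using False by presburger
  then have "real n \<le> 2 * real (n div 2 + n div 2)"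
    by linarith
  also have "\<dots> \<le> max 2 (2 / r0) * real (n div 2 + n div 2)"
    by (intro mult_right_mono) auto
  finally have "real n \<le> max 2 (2 / r0) * real (n div 2 + n div 2)" .
  then show ?thesis
    using False by (intro vol_growth_le rn_mono rn_le_mult) auto
qed

lemma hn_mult_vol_le_near:
  assumes n: "n \<ge> 1" and K: "K \<ge> 0" and near: "d x z \<le> K * rn n"
  shows "h n x z * V x (rn n) \<le> CD * CV * (max 2 (2 / r0) powr \<alpha> + (1 + K) powr \<alpha>) / 2"
proof -
  define a where "a = n div 2"
  define b where "b = n - a"
  have ab: "a + b = n" "n \<le> b + b" "1 \<le> b + b"
    unfolding a_def b_def using n by auto
  have Vx: "V x (rn n) \<le> CV * max 2 (2 / r0) powr \<alpha> * V x (rn (a + a))"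
    unfolding a_def by (rule vol_rn_le_vol_rn_half)
  have "rn n + d x z \<le> (1 + K) * rn n"
    using near by (simp add: algebra_simps)
  also have "\<dots> \<le> (1 + K) * rn (b + b)"
    using rn_mono[OF ab(2)] K by (intro mult_left_mono) auto
  finally have "rn n + d x z \<le> (1 + K) * rn (b + b)" .
  then have Vz: "V x (rn n) \<le> CV * (1 + K) powr \<alpha> * V z (rn (b + b))"
    using ab K by (intro vol_le_vol_other_center) auto
  have "h n x z \<le> (h (a + a) x x + h (b + b) z z) / 2"
    using hn_add_le_diag_mean[of a b x z] ab by simp
  also have "\<dots> \<le> (CD / V x (rn (a + a)) + CD / V z (rn (b + b))) / 2"
    by (intro divide_right_mono add_mono diag_upper) auto
  finally have "h n x z * V x (rn n) \<le>
      (CD / V x (rn (a + a)) + CD / V z (rn (b + b))) / 2 * V x (rn n)"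
    using vol_pos[of "rn n" x] by (intro mult_right_mono) auto
  also have "\<dots> = (CD * (V x (rn n) / V x (rn (a + a))) + CD * (V x (rn n) / V z (rn (b + b)))) / 2"
    by (simp only: divide_mult_eq ring_distribs times_divide_eq_right mult.commute)
  also have "\<dots> \<le> (CD * (CV * max 2 (2 / r0) powr \<alpha>) + CD * (CV * (1 + K) powr \<alpha>)) / 2"
    using Vx Vz vol_pos CD_pos
    by (intro divide_right_mono add_mono mult_left_mono) (auto simp: divide_le_eq)
  finally show ?thesis
    by (simp add: algebra_simps)
qed

lemma hn_le_exit_tails:
  assumes m: "1 \<le> m" "1 \<le> m'" and far: "d x z > 0"
    and Hz: "\<And>w. h m' z w \<le> Hz" and Hx: "\<And>w. h m x w \<le> Hx"
  shows "h (m + m') x z \<le> (Hz + Hx) * (CP * sub_gaussian \<beta> (CP * real (m + m')) (d x z / 3))"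
proof -
  define A where "A = - dball d x (d x z / 3)"
  define G where "G = CP * sub_gaussian \<beta> (CP * real (m + m')) (d x z / 3)"
  have "Hz \<ge> 0" "Hx \<ge> 0"
    using Hz Hx hn_nonneg order_trans by blast+
  moreover have "infsum (p m x) A \<le> G"
    unfolding A_def G_def using m far by (intro infsum_pn_outside_dball_le) auto
  moreover have "infsum (p m' z) (- A) \<le> G"
  proof -
    have "- A \<subseteq> - dball d z (d x z / 3)"
    proof (rule subsetI)
      fix w assume "w \<in> - A"
      then have "d x w \<le> d x z / 3"
        unfolding A_def dball_def by simp
      then show "w \<in> - dball d z (d x z / 3)"
        using d_triangle[of x z w] d_sym[of z w] far unfolding dball_def by auto
    qed
    then have "infsum (p m' z) (- A) \<le> infsum (p m' z) (- dball d z (d x z / 3))"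
      by (intro infsum_mono_neutral pn_summable) (auto simp: pn_nonneg)
    also have "\<dots> \<le> G"
      unfolding G_def using m far by (intro infsum_pn_outside_dball_le) auto
    finally show ?thesis .
  qed
  ultimately have "Hz * infsum (p m x) A + Hx * infsum (p m' z) (- A) \<le> Hz * G + Hx * G"
    by (intro add_mono mult_left_mono)
  then show ?thesis
    using hn_add_le_split[OF Hz Hx, of A] unfolding G_def[symmetric] by (simp add: distrib_right)
qed

lemma vol_rn_le_vol_rn_halves:
  fixes x z :: 'a
  assumes n: "n \<ge> 2"
  defines "t \<equiv> d x z / rn n"
  shows "V x (rn n) \<le> CV * (3 * (1 + t)) powr \<alpha> * V x (rn (n div 2))"
    and "V x (rn n) \<le> CV * (3 * (1 + t)) powr \<alpha> * V z (rn (n - n div 2))"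
proof -
  have "n \<le> 3 * (n div 2)" "n \<le> 2 * (n - n div 2)"
    using n by presburger+
  then have nm: "real n \<le> 3 * real (n div 2)" "real n \<le> 2 * real (n - n div 2)"
    by linarith+
  have rn: "rn n > 0" "d x z = rn n * t" "t \<ge> 0"
    unfolding t_def using n d_nonneg[of x z] by auto
  have "V x (rn n) \<le> CV * 3 powr \<alpha> * V x (rn (n div 2))"
    using n rn_le_mult[OF nm(1)] by (intro vol_le_vol_other_center) (auto simp: d_self)
  also have "\<dots> \<le> CV * (3 * (1 + t)) powr \<alpha> * V x (rn (n div 2))"
    using rn CV_ge_1 alpha_pos vol_pos[of "rn (n div 2)" x]
    by (intro mult_right_mono mult_left_mono powr_mono2) auto
  finally show "V x (rn n) \<le> CV * (3 * (1 + t)) powr \<alpha> * V x (rn (n div 2))" .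
  have "rn n + d x z = (1 + t) * rn n"
    using rn by (simp add: algebra_simps)
  also have "\<dots> \<le> (1 + t) * (2 * rn (n - n div 2))"
    using rn rn_le_mult[OF nm(2)] by (intro mult_left_mono) auto
  also have "\<dots> \<le> 3 * (1 + t) * rn (n - n div 2)"
    using rn mult_nonneg_nonneg[of t "rn (n - n div 2)"] by (simp add: algebra_simps)
  finally show "V x (rn n) \<le> CV * (3 * (1 + t)) powr \<alpha> * V z (rn (n - n div 2))"
    using n rn by (intro vol_le_vol_other_center) auto
qed

lemma hn_mult_vol_le_far:
  assumes B: "B \<ge> 0" and IH: "\<And>m x w. m < n \<Longrightarrow> 1 \<le> m \<Longrightarrow> h m x w * V x (rn m) \<le> B"
    and n: "n \<ge> 1" and far: "Cp * rn n < d x z"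
  defines "t \<equiv> d x z / rn n"
  shows "h n x z * V x (rn n) \<le>
    B * (2 * CV * 3 powr \<alpha> * CP) * ((1 + t) powr \<alpha> * sub_gaussian \<beta> (3 powr \<beta> * CP) t)"
proof (cases "n = 1")
  case True
  then have "\<not> E x z"
    using far edge_dist_le[of x z] by auto
  then have "h n x z = 0"
    using True hn_1_eq_0_if_not_edge by simp
  moreover have "0 \<le> B * (2 * CV * 3 powr \<alpha> * CP) * ((1 + t) powr \<alpha> * sub_gaussian \<beta> (3 powr \<beta> * CP) t)"
    using B CV_ge_1 CP_pos less_imp_le[OF sub_gaussian_pos] by (intro mult_nonneg_nonneg) auto
  ultimately show ?thesis
    by simp
next
  case False
  define m where "m = n div 2"
  define m' where "m' = n - m"
  define G where "G = CP * sub_gaussian \<beta> (3 powr \<beta> * CP) t"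
  define \<Lambda> where "\<Lambda> = CV * (3 * (1 + t)) powr \<alpha>"
  have mm: "1 \<le> m" "1 \<le> m'" "m < n" "m' < n" "m + m' = n"
    unfolding m_def m'_def using n False by auto
  have H: "h m' z w \<le> B / V z (rn m')" "h m x w \<le> B / V x (rn m)" for w
    using IH[OF mm(4,2), of z w] IH[OF mm(3,1), of x w] vol_pos by (simp_all add: pos_le_divide_eq)
  have "d x z > 0"
    using far mult_pos_pos[OF Cp_pos, of "rn n"] n by simp
  then have "h n x z \<le> (B / V z (rn m') + B / V x (rn m)) * G"
    using hn_le_exit_tails[OF mm(1,2) _ H] sub_gaussian_third_rn[OF n, of "d x z" CP]
    unfolding mm(5) G_def t_def by simp
  then have "h n x z * V x (rn n) \<le> (B / V z (rn m') + B / V x (rn m)) * G * V x (rn n)"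
    using vol_pos[of "rn n" x] by (intro mult_right_mono) auto
  also have "\<dots> = (B * (V x (rn n) / V z (rn m')) + B * (V x (rn n) / V x (rn m))) * G"
    by (simp add: field_simps)
  also have "\<dots> \<le> (B * \<Lambda> + B * \<Lambda>) * G"
    using vol_rn_le_vol_rn_halves[of n x z] False n vol_pos B CP_pos sub_gaussian_pos[of \<beta> _ t]
    unfolding G_def \<Lambda>_def m_def m'_def t_def
    by (intro mult_right_mono add_mono mult_left_mono) (auto simp: divide_le_eq less_imp_le)
  also have "(3 * (1 + t)) powr \<alpha> = 3 powr \<alpha> * (1 + t) powr \<alpha>"
    using n d_nonneg[of x z] powr_mult[of 3 "1 + t" \<alpha>] unfolding t_def by simp
  then have "(B * \<Lambda> + B * \<Lambda>) * G =
      B * (2 * CV * 3 powr \<alpha> * CP) * ((1 + t) powr \<alpha> * sub_gaussian \<beta> (3 powr \<beta> * CP) t)"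
    unfolding G_def \<Lambda>_def by (simp add: algebra_simps)
  finally show ?thesis .
qed

lemma hn_mult_vol_bounded:
  obtains B where "B \<ge> 0" "\<And>n x z. 1 \<le> n \<Longrightarrow> h n x z * V x (rn n) \<le> B"
proof -
  define A where "A = 2 * CV * 3 powr \<alpha> * CP"
  have A: "A > 0"
    unfolding A_def using CV_ge_1 CP_pos by simp
  obtain K0 where K0: "\<And>t. t \<ge> K0 \<Longrightarrow> (1 + t) powr \<alpha> * sub_gaussian \<beta> (3 powr \<beta> * CP) t \<le> 1 / A"
    using powr_mult_sub_gaussian_eventually_le[of \<beta> "3 powr \<beta> * CP" "1 / A"] beta_gt_1 CP_pos A
    by auto
  define K where "K = max K0 Cp"
  define B where "B = CD * CV * (max 2 (2 / r0) powr \<alpha> + (1 + K) powr \<alpha>) / 2"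
  have K: "K \<ge> 0" "Cp \<le> K" "K0 \<le> K"
    unfolding K_def using Cp_pos by auto
  have B: "B \<ge> 0"
    unfolding B_def using CD_pos CV_ge_1 by simp
  have "h n x z * V x (rn n) \<le> B" if "1 \<le> n" for n x z
    using that
  proof (induction n arbitrary: x z rule: less_induct)
    case (less n)
    show ?case
    proof (cases "d x z \<le> K * rn n")
      case True
      then show ?thesis
        unfolding B_def by (rule hn_mult_vol_le_near[OF less.prems K(1)])
    next
      case False
      define t where "t = d x z / rn n"
      have rn: "rn n > 0"
        using less.prems by simp
      have "K < t"
        using False rn unfolding t_def by (simp add: less_divide_eq)
      have far: "Cp * rn n < d x z"
        using False K(2) rn by (smt (verit) mult_right_mono)
      have "h n x z * V x (rn n) \<le> B * A * ((1 + t) powr \<alpha> * sub_gaussian \<beta> (3 powr \<beta> * CP) t)"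
        unfolding A_def t_def using B less.IH less.prems far by (intro hn_mult_vol_le_far) auto
      also have "\<dots> \<le> B * A * (1 / A)"
        using K0 \<open>K < t\<close> K(3) B A by (intro mult_left_mono) auto
      finally show ?thesis
        using A by simp
    qed
  qed
  then show ?thesis
    using that B by blast
qed

lemma hn_mult_vol_le_sub_gaussian:
  obtains c where "c \<ge> 1"
    "\<And>n x y. 1 \<le> n \<Longrightarrow> h n x y * V x (rn n) \<le> c * sub_gaussian \<beta> c (d x y / rn n)"
proof -
  obtain B where B: "B \<ge> 0" "\<And>n x z. 1 \<le> n \<Longrightarrow> h n x z * V x (rn n) \<le> B"
    using hn_mult_vol_bounded by blast
  define X where "X = 2 powr (\<beta> - 1) * (3 powr \<beta> * CP)"
  obtain L where L: "\<And>t. t \<ge> 0 \<Longrightarrow> (1 + t) powr \<alpha> * sub_gaussian \<beta> X t \<le> L"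
    using powr_mult_sub_gaussian_bounded[of \<beta> X \<alpha>] beta_gt_1 CP_pos alpha_pos
    unfolding X_def by auto
  define A where "A = 2 * CV * 3 powr \<alpha> * CP"
  define c where "c = max (max X (Cp powr \<beta>)) (max (3 * B) (max (B * A * L) 1))"
  have c: "c \<ge> 1" "X \<le> c" "Cp powr \<beta> \<le> c" "3 * B \<le> c" "B * A * L \<le> c"
    unfolding c_def by auto
  have "h n x y * V x (rn n) \<le> c * sub_gaussian \<beta> c t" if n: "1 \<le> n" and t: "t = d x y / rn n"
    for n x y t
  proof (cases "t \<le> Cp")
    case True
    then have "t powr \<beta> \<le> c"
      using t d_nonneg[of x y] beta_gt_1 c(3) powr_mono2[of \<beta> t Cp] by simp
    then have "c * (1 / 3) \<le> c * sub_gaussian \<beta> c t"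
      using c(1) beta_gt_1 by (intro mult_left_mono sub_gaussian_ge_one_third) auto
    then show ?thesis
      using B(2)[OF n, of x y] c(4) by linarith
  next
    case False
    then have "Cp * rn n < d x y"
      using n t by (simp add: not_le pos_less_divide_eq)
    then have "h n x y * V x (rn n) \<le> B * A * ((1 + t) powr \<alpha> * sub_gaussian \<beta> (3 powr \<beta> * CP) t)"
      unfolding A_def t using B by (intro hn_mult_vol_le_far[OF B(1) _ n]) auto
    also have "\<dots> \<le> B * A * (L * sub_gaussian \<beta> c t)"
      using B(1) CV_ge_1 CP_pos beta_gt_1 L[of t] c(2) t n d_nonneg[of x y] unfolding A_def X_def
      by (intro mult_left_mono powr_mult_sub_gaussian_le_sub_gaussian) auto
    also have "\<dots> \<le> c * sub_gaussian \<beta> c t"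
      using c(5) by (simp add: mult.assoc[symmetric] mult_right_mono less_imp_le[OF sub_gaussian_pos])
    finally show ?thesis .
  qed
  then show ?thesis
    using that c(1) by blast
qed

lemma hn_le_sub_gaussian:
  obtains c where "c > 0"
    "\<And>n x y. h n x y \<le> c / V x (rn n) * sub_gaussian \<beta> (c * real n) (d x y)"
proof -
  obtain c where c: "c \<ge> 1"
    "\<And>n x y. 1 \<le> n \<Longrightarrow> h n x y * V x (rn n) \<le> c * sub_gaussian \<beta> c (d x y / rn n)"
    using hn_mult_vol_le_sub_gaussian by blast
  have bound: "h n x y \<le> c / V x (rn n) * sub_gaussian \<beta> (c * real n) (d x y)" for n x y
  proof (cases "n = 0")
    case True
    then have "sub_gaussian \<beta> (c * real n) (d x y) = 1" and "V x (rn n) = M x"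
      using vol_eq_vmeas[of 0 x] r0_pos by (simp_all add: sub_gaussian_def)
    moreover have "1 / M x \<le> c / M x"
      using c(1) vmeas_pos[of x] by (simp add: divide_right_mono)
    ultimately show ?thesis
      using hn_le_inverse_vmeas[of n x y] by simp
  next
    case False
    then have "sub_gaussian \<beta> (c * real n) (d x y) = sub_gaussian \<beta> c (d x y / rn n)"
      using sub_gaussian_rn[of n "d x y / rn n" c] d_nonneg[of x y] by simp
    then show ?thesis
      using c(2)[of n x y] vol_pos[of "rn n" x] False by (simp add: pos_le_divide_eq mult.commute)
  qed
  show ?thesis
    by (rule that[of c, OF _ bound]) (use c(1) in simp)
qed

end

lemma vmeas_pos_if_connected:
  assumes graph: "simple_connected_graph E" and cond: "conductance E mu"
    and summable: "\<And>x. (\<lambda>y. mu x y) summable_on {y. E x y}" and edge: "E a b"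
  shows "vmeas E mu x > 0"
proof -
  obtain w where w: "E x w"
  proof (cases "x = a")
    case True
    then show ?thesis using edge that by blast
  next
    case False
    have "E\<^sup>*\<^sup>* x a"
      using graph unfolding simple_connected_graph_def by blast
    then show ?thesis
      using False that by (cases rule: converse_rtranclpE) auto
  qed
  have mu: "mu x w > 0" "\<And>y. mu x y \<ge> 0"
    using cond w unfolding conductance_def by blast+
  have "mu x w \<le> vmeas E mu x"
    unfolding vmeas_def using summable mu w by (intro elem_le_has_sum[OF _ has_sum_infsum]) auto
  then show ?thesis
    using mu by linarith
qed

lemma growth_bound_max_1:
  fixes v :: "'a \<Rightarrow> real \<Rightarrow> real"
  assumes nonneg: "\<And>x r. 0 \<le> v x r"
    and growth: "\<And>x r s. 0 < s \<Longrightarrow> s < r \<Longrightarrow> v x r \<le> C * (r / s) powr \<alpha> * v x s"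
    and s: "0 < s" "s \<le> r"
  shows "v x r \<le> max C 1 * (r / s) powr \<alpha> * v x s"
proof (cases "s = r")
  case True
  then show ?thesis
    using s nonneg[of x r] by (simp add: mult_le_cancel_right1)
next
  case False
  then have "v x r \<le> C * (r / s) powr \<alpha> * v x s"
    using growth s by simp
  also have "\<dots> \<le> max C 1 * (r / s) powr \<alpha> * v x s"
    using nonneg[of x s] by (intro mult_right_mono) auto
  finally show ?thesis .
qed

theorem proposition6p4:
  fixes E :: "'a::countable \<Rightarrow> 'a \<Rightarrow> bool"
    and mu :: "'a \<Rightarrow> 'a \<Rightarrow> real"
    and d :: "'a \<Rightarrow> 'a \<Rightarrow> real"
    and \<alpha> \<beta> :: real
  assumes graph: "simple_connected_graph E"
    and cond: "conductance E mu"
    and fin_mu: "\<forall>x. (\<lambda>y. mu x y) summable_on {y. E x y}"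
    and fin_vol: "\<forall>x r. vmeas E mu summable_on dball d x r"
    and metric: "is_metric d"
    and alpha: "\<alpha> > 0" and beta: "\<beta> > 1"
    and DUHK: "\<exists>C>0. \<forall>x n. hn E mu n x x \<le> C / vol E mu d x (real n powr (1 / \<beta>))"
    and VG: "\<exists>C>0. \<forall>x r s. 0 < s \<and> s < r \<longrightarrow> vol E mu d x r \<le> C * (r / s) powr \<alpha> * vol E mu d x s"
    and Psi: "\<exists>C>0. \<forall>n x r. n \<ge> 1 \<and> r > 0 \<longrightarrow>
               exit_prob E mu d x r n \<le> C * exp (- ((r powr \<beta> / (C * real n)) powr (1 / (\<beta> - 1))))"
    and NdU: "\<exists>Cp. \<forall>x y. E x y \<longrightarrow> d x y \<le> Cp"
    and dL: "\<exists>r0>0. \<forall>x y. x \<noteq> y \<longrightarrow> d x y \<ge> r0"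
  shows "\<exists>c1>0. \<forall>x y n. hn E mu n x y \<le>
           c1 / vol E mu d x (real n powr (1 / \<beta>)) *
           exp (- ((d x y powr \<beta> / (c1 * real n)) powr (1 / (\<beta> - 1))))"
proof (cases "\<exists>a b. E a b")
  case False
  \<comment> \<open>all vertex measures vanish, so both sides are \<open>0\<close> by division by zero\<close>
  then have "vmeas E mu = (\<lambda>_. 0)"
    by (simp add: vmeas_def fun_eq_iff)
  then show ?thesis
    by (intro exI[of _ 1]) (simp add: hn_def vol_def)
next
  case True
  then obtain a b where "E a b" by blast
  interpret reversible_walk E mu
    using cond fin_mu vmeas_pos_if_connected[OF graph cond _ \<open>E a b\<close>]
    by unfold_locales (auto simp: conductance_def)
  obtain CD CV CP Cp r0 where "CD > 0" "CV > 0" "CP > 0" "r0 > 0"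
    "\<And>x n. hn E mu n x x \<le> CD / vol E mu d x (real n powr (1 / \<beta>))"
    "\<And>x r s. 0 < s \<Longrightarrow> s < r \<Longrightarrow> vol E mu d x r \<le> CV * (r / s) powr \<alpha> * vol E mu d x s"
    "\<And>n x r. n \<ge> 1 \<Longrightarrow> r > 0 \<Longrightarrow> exit_prob E mu d x r n \<le> CP * sub_gaussian \<beta> (CP * real n) r"
    "\<And>x y. E x y \<Longrightarrow> d x y \<le> Cp" "\<And>x y. x \<noteq> y \<Longrightarrow> d x y \<ge> r0"
    using DUHK VG Psi NdU dL unfolding sub_gaussian_def by metis
  moreover have "vol E mu d x r \<ge> 0" for x r
    unfolding vol_def using vmeas_pos by (simp add: infsum_nonneg less_imp_le)
  ultimately interpret sub_gaussian_walk E mu d \<alpha> \<beta> CD "max CV 1" CP "max Cp 1" r0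
    using metric fin_vol alpha beta
    by unfold_locales (auto intro: growth_bound_max_1 max.coboundedI1)
  obtain c where "c > 0" "\<And>n x y. hn E mu n x y \<le> c / vol E mu d x (real n powr (1 / \<beta>)) *
      sub_gaussian \<beta> (c * real n) (d x y)"
    using hn_le_sub_gaussian by blast
  then show ?thesis
    unfolding sub_gaussian_def by blast
qed

end
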